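(* Let $(\omega_a)_{a\in\mathbb{Z}^d}$ be real frequencies satisfying the following non-resonance condition: there exist $\gamma>0$, $\nu>0$, $c_0>0$ such that for all $r\ge3$ and all non-resonant ${\boldsymbol j}\in\mathcal{Z}^r$, $$|\Omega({\boldsymbol j})|\ge\frac{\gamma c_0^r}{\mu({\boldsymbol j})^{\nu r}}.$$ Let $N$ be fixed and let $Q\in\mathcal{P}_k$ be a homogeneous polynomial of degree $k$. Then the homological equation $\{\chi,H_0\}-Z=Q$ admits a solution $(\chi,Z)$ of homogeneous polynomials of degree $k$ such that $Z$ is in $N$-normal form and $$\|Z\|\le\|Q\|,\qquad \|\chi\|\le\frac{N^{\nu k}}{\gamma c_0^k}\|Q\|.$$
   Context: $\mathcal{Z}=\mathbb{Z}^d\times\{\pm1\}$; for $j=(a,\delta)$, $|j|=|a|$ and $\bar j=(a,-\delta)$; $z\in\mathbb{C}^{\mathcal{Z}}$ identified with $(\xi,\eta)$ via $z_{(a,1)}=\xi_a$, $z_{(a,-1)}=\eta_a$. $H_0=\sum_a\omega_a\xi_a\eta_a$. Poisson bracket: $\{F,G\}=i\sum_a\big(\frac{\partial F}{\partial\eta_a}\frac{\partial G}{\partial\xi_a}-\frac{\partial F}{\partial\xi_a}\frac{\partial G}{\partial\eta_a}\big)$. For ${\boldsymbol j}=(j_1,\dots,j_\ell)$, $j_i=(a_i,\delta_i)$: $z_{\boldsymbol j}=z_{j_1}\cdots z_{j_\ell}$, momentum $\mathcal{M}({\boldsymbol j})=\sum\delta_ia_i$, divisor $\Omega({\boldsymbol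 j})=\sum_i\delta_i\omega_{a_i}$, $\mathcal{I}_\ell=\{{\boldsymbol j}:\mathcal{M}({\boldsymbol j})=0\}$, and for $\ell\ge3$, $\mu({\boldsymbol j})$ is the third largest of $|j_1|,\dots,|j_\ell|$. ${\boldsymbol j}$ is resonant (${\boldsymbol j}\in\mathcal{N}_\ell$) if $\ell$ is even and ${\boldsymbol j}$ is, up to order, $(i_1,\dots,i_{\ell/2},\bar i_1,\dots,\bar i_{\ell/2})$; otherwise non-resonant. $\mathcal{P}_k$: real polynomials $P=\sum_{\ell=2}^k\sum_{{\boldsymbol j}\in\mathcal{I}_\ell}a_{\boldsymbol j}z_{\boldsymbol j}$ with $a_{\bar{\boldsymbol j}}=\overline{a_{\boldsymbol j}}$ and bounded coefficients, with norm $\|P\|=\sum_\ell\sup_{{\boldsymbol j}\in\mathcal{I}_\ell}|a_{\boldsymbol j}|$. $\mathcal{J}_\ell(N)=\{{\boldsymbol j}\in\mathcal{I}_\ell:\mu({\boldsymbol j})>N\}$; $Z\in\mathcal{P}_k$ is in $N$-normal form if $Z=\sum_{\ell=3}^k\sum_{{\boldsymbol j}\in\mathcal{N}_\ell\cup\mathcal{J}_\ell(N)}a_{\boldsymbol j}z_{\boldsymbol j}$. *)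

theory Defs
  imports "HOL-Analysis.Analysis"
begin

text \<open>Indices j = (a, delta) in Z^d x {+1,-1}; the sign is encoded as a boolean:
  True means delta = +1 (variable xi_a), False means delta = -1 (variable eta_a).\<close>

type_synonym 'd idx = "(int ^ 'd::finite) \<times> bool"

definition sgnv :: "bool \<Rightarrow> int" where
  "sgnv b = (if b then 1 else -1)"

definition inorm :: "int ^ ('d::finite) \<Rightarrow> real" where
  "inorm a = max 1 (norm (\<chi> i. real_of_int (a $ i)))"

definition ibar :: "('d::finite) idx \<Rightarrow> 'd idx" where
  "ibar j = (fst j, \<not> snd j)"

definition momentum :: "('d::finite) idx list \<Rightarrow> int ^ 'd" where
  "momentum js = (\<chi> i. sum_list (map (\<lambda>(a, b). sgnv b * a $ i) js))"

definition Omega :: "(int ^ ('d::finite) \<Rightarrow> real) \<Rightarrow> 'd idx list \<Rightarrow> real" where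
  "Omega \<omega> js = sum_list (map (\<lambda>(a, b). real_of_int (sgnv b) * \<omega> a) js)"

text \<open>mu(j): third largest of |j_1|, ..., |j_l| (for l >= 3)\<close>
definition mu :: "('d::finite) idx list \<Rightarrow> real" where
  "mu js = rev (sort (map (\<lambda>j. inorm (fst j)) js)) ! 2"

definition resonant :: "('d::finite) idx list \<Rightarrow> bool" where
  "resonant js \<longleftrightarrow> even (length js) \<and>
     (\<exists>is. length is = length js div 2 \<and> mset js = mset (is @ map ibar is))"

text \<open>Polynomials are represented by their coefficient families
  P = sum_l sum_{j in I_l} a_j z_j, as functions from index tuples to coefficients.\<close>

text \<open>Element of P_k: real, bounded coefficients supported on I_l, 2 <= l <= k.\<close>
definition in_Pk :: "nat \<Rightarrow> (('d::finite) idx list \<Rightarrow> complex) \<Rightarrow> bool" where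
  "in_Pk k P \<longleftrightarrow>
     (\<forall>js. P js \<noteq> 0 \<longrightarrow> 2 \<le> length js \<and> length js \<le> k \<and> momentum js = 0) \<and>
     (\<forall>js. P (map ibar js) = cnj (P js)) \<and>
     (\<exists>B. \<forall>js. cmod (P js) \<le> B)"

definition hom_poly :: "nat \<Rightarrow> (('d::finite) idx list \<Rightarrow> complex) \<Rightarrow> bool" where
  "hom_poly k P \<longleftrightarrow> in_Pk k P \<and> (\<forall>js. P js \<noteq> 0 \<longrightarrow> length js = k)"

definition pnorm :: "nat \<Rightarrow> (('d::finite) idx list \<Rightarrow> complex) \<Rightarrow> real" where
  "pnorm k P = (\<Sum>l = 2..k. Sup {cmod (P js) | js. length js = l \<and> momentum js = 0})"

definition normal_form :: "nat \<Rightarrow> nat \<Rightarrow> (('d::finite) idx list \<Rightarrow> complex) \<Rightarrow> bool" where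
  "normal_form N k Z \<longleftrightarrow> in_Pk k Z \<and>
     (\<forall>js. Z js \<noteq> 0 \<longrightarrow> 3 \<le> length js \<and> (resonant js \<or> mu js > real N))"

text \<open>Poisson bracket {chi, H_0} with H_0 = sum_a omega_a xi_a eta_a, on coefficient families.
  For a monomial: {z_j, H_0} = i sum_a omega_a (d z_j/d eta_a * eta_a - d z_j/d xi_a * xi_a)
  = i (sum over eta-factors of omega - sum over xi-factors of omega) z_j = -i Omega(j) z_j.\<close>
definition pb_H0 :: "(int ^ ('d::finite) \<Rightarrow> real) \<Rightarrow> ('d idx list \<Rightarrow> complex) \<Rightarrow> ('d idx list \<Rightarrow> complex)" where
  "pb_H0 \<omega> ch = (\<lambda>js. \<i> * complex_of_real
      (sum_list (map (\<lambda>(a, b). if b then - \<omega> a else \<omega> a) js)) * ch js)"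

end

theory Submission
  imports Defs
begin

text \<open>Every monomial z_j is an eigenvector of the operator {-, H_0}, with eigenvalue -i Omega(j).
  So the homological equation is solved coefficientwise: monomials that are resonant or have
  mu(j) > N go into Z, and every other monomial of Q is divided by its eigenvalue. For those
  monomials mu(j) \<le> N, so the non-resonance condition bounds 1/|Omega(j)| by
  N^(nu k)/(gamma c0^k); this gives the estimate for chi, while |Z_j| \<le> |Q_j| is immediate.\<close>

lemma pb_H0_eq: "pb_H0 \<omega> ch js = - \<i> * complex_of_real (Omega \<omega> js) * ch js"
proof -
  have "sum_list (map (\<lambda>(a, b). if b then - \<omega> a else \<omega> a) js) = - Omega \<omega> js"
    by (induction js) (auto simp: Omega_def sgnv_def)
  then show ?thesis
    by (simp add: pb_H0_def)
qed

lemma ibar_ibar [simp]: "ibar (ibar j) = j"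
  by (simp add: ibar_def)

lemma map_ibar_ibar [simp]: "map ibar (map ibar js) = js"
  by (induction js) simp_all

lemma Omega_map_ibar: "Omega \<omega> (map ibar js) = - Omega \<omega> js"
  by (induction js) (auto simp: Omega_def ibar_def sgnv_def)

lemma mu_map_ibar: "mu (map ibar js) = mu js"
  by (simp add: mu_def ibar_def comp_def case_prod_beta)

lemma resonant_map_ibar_imp: "resonant js \<Longrightarrow> resonant (map ibar js)"
proof -
  assume "resonant js"
  then obtain ys where ys: "even (length js)" "length ys = length js div 2"
    "mset js = mset (ys @ map ibar ys)"
    unfolding resonant_def by blast
  have "mset (map ibar js) = image_mset ibar (mset js)"
    by simp
  also have "\<dots> = mset (map ibar ys @ map ibar (map ibar ys))"
    using ys(3) by (simp add: ac_simps image_mset.compositionality comp_def)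
  finally show ?thesis
    unfolding resonant_def using ys by (intro conjI exI[of _ "map ibar ys"]) auto
qed

lemma resonant_map_ibar: "resonant (map ibar js) \<longleftrightarrow> resonant js"
  by (metis map_ibar_ibar resonant_map_ibar_imp)

lemma mu_ge_1:
  assumes "length js \<ge> 3"
  shows "mu js \<ge> 1"
proof -
  define xs where "xs = rev (sort (map (\<lambda>j. inorm (fst j)) js))"
  have "xs ! 2 \<in> set xs"
    using assms by (intro nth_mem) (simp add: xs_def)
  then have "xs ! 2 \<in> (\<lambda>j. inorm (fst j)) ` set js"
    by (simp add: xs_def)
  then have "1 \<le> xs ! 2"
    by (auto simp: inorm_def)
  then show ?thesis
    by (simp add: mu_def xs_def)
qed

lemma small_divisor_inverse_bound:
  fixes x m \<gamma> \<nu> c0 :: real and N r :: nat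
  assumes "\<gamma> > 0" "c0 > 0" "\<nu> \<ge> 0" "1 \<le> m" "m \<le> real N"
    and lower: "\<bar>x\<bar> \<ge> \<gamma> * c0 ^ r / (m powr (\<nu> * real r))"
  shows "x \<noteq> 0" and "1 / \<bar>x\<bar> \<le> real N powr (\<nu> * real r) / (\<gamma> * c0 ^ r)"
proof -
  have pos: "\<gamma> * c0 ^ r / (m powr (\<nu> * real r)) > 0"
    using assms(1,2,4) by simp
  then have x_pos: "\<bar>x\<bar> > 0"
    using lower by linarith
  then show "x \<noteq> 0"
    by simp
  have "1 / \<bar>x\<bar> \<le> 1 / (\<gamma> * c0 ^ r / (m powr (\<nu> * real r)))"
    by (rule divide_left_mono[OF lower _ mult_pos_pos[OF x_pos pos]]) simp
  also have "\<dots> = m powr (\<nu> * real r) / (\<gamma> * c0 ^ r)"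
    by simp
  also have "\<dots> \<le> real N powr (\<nu> * real r) / (\<gamma> * c0 ^ r)"
    using assms by (intro divide_right_mono powr_mono2) auto
  finally show "1 / \<bar>x\<bar> \<le> real N powr (\<nu> * real r) / (\<gamma> * c0 ^ r)" .
qed

lemma momentum_replicate_zero: "momentum (replicate l ((0::int ^ 'd::finite), b)) = 0"
  by (simp add: momentum_def vec_eq_iff sum_list_replicate)

lemma pnorm_dominated:
  fixes P Q :: "('d::finite) idx list \<Rightarrow> complex"
  assumes dom: "\<And>js. cmod (P js) \<le> C * cmod (Q js)" and "C \<ge> 0"
    and bounded: "\<And>js. cmod (Q js) \<le> B"
  shows "pnorm k P \<le> C * pnorm k Q"
  unfolding pnorm_def sum_distrib_left
proof (rule sum_mono)
  fix l
  let ?sup = "\<lambda>F :: 'd idx list \<Rightarrow> complex. Sup {cmod (F js) |js. length js = l \<and> momentum js = 0}"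
  have nonempty: "{cmod (P js) |js. length js = l \<and> momentum js = 0} \<noteq> {}"
    using momentum_replicate_zero[where 'd='d, of l True]
    by (auto intro!: exI[of _ "replicate l (0, True)"])
  have bdd: "bdd_above {cmod (Q js) |js. length js = l \<and> momentum js = 0}"
    using bounded by (auto simp: bdd_above_def)
  show "?sup P \<le> C * ?sup Q"
  proof (rule cSup_least[OF nonempty])
    fix x
    assume "x \<in> {cmod (P js) |js. length js = l \<and> momentum js = 0}"
    then obtain js where js: "x = cmod (P js)" "length js = l" "momentum js = 0"
      by blast
    have "cmod (Q js) \<le> ?sup Q"
      using js by (intro cSup_upper[OF _ bdd]) blast
    then show "x \<le> C * ?sup Q"
      using js dom[of js] \<open>C \<ge> 0\<close> by (meson mult_left_mono order_trans)
  qed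
qed

lemma hom_poly_dominated:
  assumes "hom_poly k Q" and "C \<ge> 0"
    and dom: "\<And>js. cmod (P js) \<le> C * cmod (Q js)"
    and real: "\<And>js. P (map ibar js) = cnj (P js)"
  shows "hom_poly k P"
proof -
  obtain B where B: "\<And>js. cmod (Q js) \<le> B"
    using assms(1) by (auto simp: hom_poly_def in_Pk_def)
  have support: "Q js \<noteq> 0" if "P js \<noteq> 0" for js
    using dom[of js] that by auto
  have bounded: "cmod (P js) \<le> C * B" for js
    using dom[of js] mult_left_mono[OF B \<open>C \<ge> 0\<close>] by (rule order_trans)
  show ?thesis
    unfolding hom_poly_def in_Pk_def
  proof (intro conjI allI impI exI[of _ "C * B"] real bounded)
    fix js
    assume "P js \<noteq> 0"
    then show "2 \<le> length js" "length js \<le> k" "momentum js = 0" "length js = k"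
      using assms(1) support[of js] unfolding hom_poly_def in_Pk_def by blast+
  qed
qed

definition normal_support :: "nat \<Rightarrow> ('d::finite) idx list \<Rightarrow> bool" where
  "normal_support N js \<longleftrightarrow> resonant js \<or> mu js > real N"

definition homological_Z :: "nat \<Rightarrow> (('d::finite) idx list \<Rightarrow> complex) \<Rightarrow> 'd idx list \<Rightarrow> complex" where
  "homological_Z N Q js = (if normal_support N js then - Q js else 0)"

definition homological_chi ::
    "(int ^ ('d::finite) \<Rightarrow> real) \<Rightarrow> nat \<Rightarrow> ('d idx list \<Rightarrow> complex) \<Rightarrow> 'd idx list \<Rightarrow> complex" where
  "homological_chi \<omega> N Q js = (if normal_support N js then 0 else \<i> * Q js / Omega \<omega> js)"

lemma normal_support_map_ibar: "normal_support N (map ibar js) \<longleftrightarrow> normal_support N js"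
  by (simp add: normal_support_def resonant_map_ibar mu_map_ibar)

lemma homological_Z_map_ibar:
  assumes "\<And>js. Q (map ibar js) = cnj (Q js)"
  shows "homological_Z N Q (map ibar js) = cnj (homological_Z N Q js)"
  by (simp add: homological_Z_def normal_support_map_ibar assms)

lemma homological_chi_map_ibar:
  assumes "\<And>js. Q (map ibar js) = cnj (Q js)"
  shows "homological_chi \<omega> N Q (map ibar js) = cnj (homological_chi \<omega> N Q js)"
  by (simp add: homological_chi_def normal_support_map_ibar Omega_map_ibar assms)

lemma norm_homological_Z_le: "cmod (homological_Z N Q js) \<le> cmod (Q js)"
  by (simp add: homological_Z_def)

lemma hom_poly_homological_Z:
  assumes "hom_poly k Q"
  shows "hom_poly k (homological_Z N Q)"
proof (rule hom_poly_dominated[OF assms zero_le_one])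
  show "cmod (homological_Z N Q js) \<le> 1 * cmod (Q js)" for js
    using norm_homological_Z_le by simp
  show "homological_Z N Q (map ibar js) = cnj (homological_Z N Q js)" for js
    using assms by (intro homological_Z_map_ibar) (auto simp: hom_poly_def in_Pk_def)
qed

lemma normal_form_homological_Z:
  assumes "hom_poly k Q" "k \<ge> 3"
  shows "normal_form N k (homological_Z N Q)"
  using hom_poly_homological_Z[OF assms(1)] assms unfolding normal_form_def hom_poly_def
  by (auto simp: homological_Z_def normal_support_def split: if_splits)

definition diophantine_at :: "(int ^ ('d::finite) \<Rightarrow> real) \<Rightarrow> real \<Rightarrow> real \<Rightarrow> real \<Rightarrow> nat \<Rightarrow> bool" where
  "diophantine_at \<omega> \<gamma> \<nu> c0 r \<longleftrightarrow> (\<forall>js :: 'd idx list. length js = r \<and> \<not> resonant js \<longrightarrow>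
     \<bar>Omega \<omega> js\<bar> \<ge> \<gamma> * c0 ^ r / (mu js powr (\<nu> * real r)))"

lemma
  assumes "\<gamma> > 0" "c0 > 0" "\<nu> \<ge> 0" "k \<ge> 3" "diophantine_at \<omega> \<gamma> \<nu> c0 k"
    and "length js = k" "\<not> normal_support N js"
  shows Omega_nonzero_off_normal_support: "Omega \<omega> js \<noteq> 0"
    and inverse_Omega_le_off_normal_support:
      "1 / \<bar>Omega \<omega> js\<bar> \<le> real N powr (\<nu> * real k) / (\<gamma> * c0 ^ k)"
proof -
  have "\<not> resonant js" and mu_le: "mu js \<le> real N"
    using assms(7) by (auto simp: normal_support_def)
  then have lower: "\<bar>Omega \<omega> js\<bar> \<ge> \<gamma> * c0 ^ k / (mu js powr (\<nu> * real k))"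
    using assms(5,6) unfolding diophantine_at_def by blast
  have "1 \<le> mu js"
    using mu_ge_1[of js] assms(4,6) by simp
  from small_divisor_inverse_bound[OF assms(1-3) this mu_le lower]
  show "Omega \<omega> js \<noteq> 0"
    and "1 / \<bar>Omega \<omega> js\<bar> \<le> real N powr (\<nu> * real k) / (\<gamma> * c0 ^ k)" .
qed

lemma homological_equation:
  assumes "\<gamma> > 0" "c0 > 0" "\<nu> \<ge> 0" "k \<ge> 3" "diophantine_at \<omega> \<gamma> \<nu> c0 k"
    and "hom_poly k Q"
  shows "pb_H0 \<omega> (homological_chi \<omega> N Q) js - homological_Z N Q js = Q js"
proof (cases "Q js = 0 \<or> normal_support N js")
  case True
  then show ?thesis
    by (auto simp: pb_H0_eq homological_chi_def homological_Z_def)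
next
  case False
  then have "Omega \<omega> js \<noteq> 0"
    using Omega_nonzero_off_normal_support[OF assms(1-5)] assms(6) by (auto simp: hom_poly_def)
  with False show ?thesis
    by (simp add: pb_H0_eq homological_chi_def homological_Z_def field_simps)
qed

lemma norm_homological_chi_le:
  assumes "\<gamma> > 0" "c0 > 0" "\<nu> \<ge> 0" "k \<ge> 3" "diophantine_at \<omega> \<gamma> \<nu> c0 k"
    and "hom_poly k Q"
  shows "cmod (homological_chi \<omega> N Q js)
           \<le> real N powr (\<nu> * real k) / (\<gamma> * c0 ^ k) * cmod (Q js)"
proof (cases "Q js = 0 \<or> normal_support N js")
  case True
  then have "homological_chi \<omega> N Q js = 0"
    by (auto simp: homological_chi_def)
  moreover have "0 \<le> real N powr (\<nu> * real k) / (\<gamma> * c0 ^ k)"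
    using assms(1,2) by simp
  ultimately show ?thesis
    by (metis mult_nonneg_nonneg norm_ge_zero norm_zero)
next
  case False
  then have "1 / \<bar>Omega \<omega> js\<bar> \<le> real N powr (\<nu> * real k) / (\<gamma> * c0 ^ k)"
    using inverse_Omega_le_off_normal_support[OF assms(1-5)] assms(6) by (auto simp: hom_poly_def)
  then have "cmod (Q js) * (1 / \<bar>Omega \<omega> js\<bar>)
      \<le> cmod (Q js) * (real N powr (\<nu> * real k) / (\<gamma> * c0 ^ k))"
    by (rule mult_left_mono) simp
  with False show ?thesis
    by (simp add: homological_chi_def norm_divide norm_mult mult.commute)
qed

lemma hom_poly_homological_chi:
  assumes "\<gamma> > 0" "c0 > 0" "\<nu> \<ge> 0" "k \<ge> 3" "diophantine_at \<omega> \<gamma> \<nu> c0 k"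
    and "hom_poly k Q"
  shows "hom_poly k (homological_chi \<omega> N Q)"
proof (rule hom_poly_dominated[OF assms(6) _ norm_homological_chi_le[OF assms]])
  show "0 \<le> real N powr (\<nu> * real k) / (\<gamma> * c0 ^ k)"
    using assms(1,2) by simp
  show "homological_chi \<omega> N Q (map ibar js) = cnj (homological_chi \<omega> N Q js)" for js
    using assms(6) by (intro homological_chi_map_ibar) (auto simp: hom_poly_def in_Pk_def)
qed

theorem proposition2p4:
  fixes \<omega> :: "int ^ 'd \<Rightarrow> real" and \<gamma> \<nu> c0 :: real and N k :: nat
    and Q :: "'d idx list \<Rightarrow> complex"
  assumes "\<gamma> > 0" and "\<nu> > 0" and "c0 > 0"
    and "\<forall>r\<ge>3. \<forall>js :: 'd idx list. length js = r \<and> \<not> resonant js \<longrightarrow>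
           \<bar>Omega \<omega> js\<bar> \<ge> \<gamma> * c0 ^ r / (mu js powr (\<nu> * real r))"
    and "k \<ge> 3"
    and "hom_poly k Q"
  shows "\<exists>ch Z. hom_poly k ch \<and> hom_poly k Z \<and> normal_form N k Z \<and>
           (\<forall>js. pb_H0 \<omega> ch js - Z js = Q js) \<and>
           pnorm k Z \<le> pnorm k Q \<and>
           pnorm k ch \<le> real N powr (\<nu> * real k) / (\<gamma> * c0 ^ k) * pnorm k Q"
proof -
  have "diophantine_at \<omega> \<gamma> \<nu> c0 k"
    using assms(4,5) unfolding diophantine_at_def by blast
  note conds = assms(1,3) less_imp_le[OF assms(2)] assms(5) this assms(6)
  obtain B where B: "\<And>js. cmod (Q js) \<le> B"
    using assms(6) by (auto simp: hom_poly_def in_Pk_def)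
  have "pnorm k (homological_chi \<omega> N Q) \<le> real N powr (\<nu> * real k) / (\<gamma> * c0 ^ k) * pnorm k Q"
    by (rule pnorm_dominated[OF norm_homological_chi_le[OF conds] _ B]) (use assms(1,3) in simp)
  moreover have "pnorm k (homological_Z N Q) \<le> 1 * pnorm k Q"
    by (rule pnorm_dominated[OF _ _ B]) (simp_all add: norm_homological_Z_le)
  ultimately show ?thesis
    using hom_poly_homological_chi[OF conds] hom_poly_homological_Z[OF assms(6)]
      normal_form_homological_Z[OF assms(6,5)] homological_equation[OF conds]
    by (intro exI[of _ "homological_chi \<omega> N Q"] exI[of _ "homological_Z N Q"]) simp
qed

end
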